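(* Let $G=(V,E)$ be a claw-free graph, let $L\subseteq V$ be such that $G[L]$ is an induced path or a hole, and let $\mathbf{j}\in V\setminus L$. Write $N=\Gamma_L(\mathbf{j})$. Then one of the following holds: (a.i) $N=\emptyset$; (a.ii) $|N|=2$ and the two vertices of $N$ are adjacent; (a.iii) $|N|=4$ and $G[N]$ is either a disjoint union of two edges or a path with three edges; (a.iv) $L$ is a hole of length four and $N=L$; (a.v) $L$ is an induced path with at least one edge and $N$ consists of the two endpoints of $L$; (b.i) $|N|=3$, $G[N]$ is a path with two edges, and each vertex of $N$ has two neighbours in $L$; (b.ii) $L$ is a hole of length five and $N=L$; (b.iii) $L$ is an induced path and $N$ consists of exactly one endpoint of $L$; (b.iv) $L$ is an induced path and $N=\{\mathbf{e},\mathbf{x},\mathbf{y}\}$ where $\mathbf{e}$ is an endpoint of $L$ and $\mathbf{x},\mathbf{y}$ are adjacent vertices of $L$.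
   Context: A hole is an induced cycle of length at least 4. An induced path is a vertex set $\{\mathbf{j}_0,\dots,\mathbf{j}_\ell\}$ whose induced edges are exactly $\{\mathbf{j}_i,\mathbf{j}_{i+1}\}$, $0\le i<\ell$; its endpoints are $\mathbf{j}_0,\mathbf{j}_\ell$. The claw is $K_{1,3}$; claw-free means no four vertices induce a claw. $\Gamma_L(\mathbf{j})=\Gamma(\mathbf{j})\cap L$ is the set of neighbours of $\mathbf{j}$ in $L$. *)

theory Defs
  imports Main
begin

definition graph :: "'a set \<Rightarrow> ('a \<Rightarrow> 'a \<Rightarrow> bool) \<Rightarrow> bool" where
  "graph V E \<longleftrightarrow> (\<forall>x y. E x y \<longrightarrow> E y x) \<and> (\<forall>x. \<not> E x x)
     \<and> (\<forall>x y. E x y \<longrightarrow> x \<in> V \<and> y \<in> V)"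

definition claw_free :: "'a set \<Rightarrow> ('a \<Rightarrow> 'a \<Rightarrow> bool) \<Rightarrow> bool" where
  "claw_free V E \<longleftrightarrow> \<not> (\<exists>c x y z. c \<in> V \<and> x \<in> V \<and> y \<in> V \<and> z \<in> V \<and>
     x \<noteq> y \<and> x \<noteq> z \<and> y \<noteq> z \<and> E c x \<and> E c y \<and> E c z \<and>
     \<not> E x y \<and> \<not> E x z \<and> \<not> E y z)"

definition induced_path :: "('a \<Rightarrow> 'a \<Rightarrow> bool) \<Rightarrow> 'a list \<Rightarrow> bool" where
  "induced_path E ps \<longleftrightarrow> ps \<noteq> [] \<and> distinct ps \<and>
     (\<forall>i<length ps. \<forall>j<length ps. E (ps ! i) (ps ! j) \<longleftrightarrow> (i = j + 1 \<or> j = i + 1))"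

definition induced_hole :: "('a \<Rightarrow> 'a \<Rightarrow> bool) \<Rightarrow> 'a list \<Rightarrow> bool" where
  "induced_hole E cs \<longleftrightarrow> length cs \<ge> 4 \<and> distinct cs \<and>
     (\<forall>i<length cs. \<forall>j<length cs. E (cs ! i) (cs ! j) \<longleftrightarrow>
        (j = (i + 1) mod length cs \<or> i = (j + 1) mod length cs))"

definition is_induced_path_set :: "('a \<Rightarrow> 'a \<Rightarrow> bool) \<Rightarrow> 'a set \<Rightarrow> bool" where
  "is_induced_path_set E L \<longleftrightarrow> (\<exists>ps. induced_path E ps \<and> set ps = L)"

definition is_hole_set :: "('a \<Rightarrow> 'a \<Rightarrow> bool) \<Rightarrow> 'a set \<Rightarrow> bool" where
  "is_hole_set E L \<longleftrightarrow> (\<exists>cs. induced_hole E cs \<and> set cs = L)"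

definition path_endpoint :: "('a \<Rightarrow> 'a \<Rightarrow> bool) \<Rightarrow> 'a set \<Rightarrow> 'a \<Rightarrow> bool" where
  "path_endpoint E L v \<longleftrightarrow> (\<exists>ps. induced_path E ps \<and> set ps = L \<and> (v = hd ps \<or> v = last ps))"

definition nbhd_in :: "('a \<Rightarrow> 'a \<Rightarrow> bool) \<Rightarrow> 'a set \<Rightarrow> 'a \<Rightarrow> 'a set" where
  "nbhd_in E L j = {v \<in> L. E j v}"

end

theory Submission
  imports Defs "HOL-Number_Theory.Cong"
begin

(* Number the vertices of an induced path L and let S be the set of positions of the
   neighbours of j. A claw centred at j shows that S contains no three positions pairwise
   at distance at least two; a claw centred at an interior vertex v of L, with j and the two
   path-neighbours of v as leaves, shows that an interior position of S always has a
   neighbouring position in S. The sets of positions with these two properties are easily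
   listed, and each of them gives one of the alternatives.
   If L is a hole and j sees all of L, then a claw at j with three pairwise nonadjacent
   vertices of L forces |L| <= 5. Otherwise deleting a non-neighbour of j turns L into an
   induced path with the same neighbourhood N; since every vertex of a hole has two
   nonadjacent neighbours, the same claw argument shows that no vertex of N is isolated
   in N, which rules out the alternatives with an isolated endpoint. *)

lemma claw_freeD:
  assumes "claw_free V E" "c \<in> V" "x \<in> V" "y \<in> V" "z \<in> V" "distinct [x, y, z]"
    "E c x" "E c y" "E c z"
  shows "E x y \<or> E x z \<or> E y z"
  using assms unfolding claw_free_def by auto

lemma graph_sym: "graph V E \<Longrightarrow> E x y \<Longrightarrow> E y x"
  unfolding graph_def by blast

lemma induced_path_distinct: "induced_path E ps \<Longrightarrow> distinct ps"
  unfolding induced_path_def by blast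

lemma induced_path_adj_iff:
  "induced_path E ps \<Longrightarrow> i < length ps \<Longrightarrow> k < length ps \<Longrightarrow>
    E (ps ! i) (ps ! k) \<longleftrightarrow> i = k + 1 \<or> k = i + 1"
  unfolding induced_path_def by blast

lemma induced_path_slice:
  assumes "induced_path E ps" "0 < l" "a + l \<le> length ps"
  shows "induced_path E (map ((!) ps) [a..<a + l])"
proof -
  have "distinct (map ((!) ps) [a..<a + l])"
    using induced_path_distinct[OF assms(1)] assms(3)
    by (auto simp: distinct_map inj_on_def nth_eq_iff_index_eq)
  then show ?thesis
    using assms induced_path_adj_iff[OF assms(1)] unfolding induced_path_def by auto
qed

lemma card_nbhd_in_induced_path_interior:
  assumes "induced_path E ps" "0 < i" "i + 1 < length ps"
  shows "card (nbhd_in E (set ps) (ps ! i)) = 2"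
proof -
  have "ps ! (i - 1) \<in> set ps" "ps ! (i + 1) \<in> set ps"
    using assms(3) by simp_all
  then have "nbhd_in E (set ps) (ps ! i) = {ps ! (i - 1), ps ! (i + 1)}"
    using assms induced_path_adj_iff[OF assms(1), of i]
    by (auto simp: nbhd_in_def in_set_conv_nth)
  moreover have "ps ! (i - 1) \<noteq> ps ! (i + 1)"
    using assms induced_path_distinct[OF assms(1)] by (simp add: nth_eq_iff_index_eq)
  ultimately show ?thesis
    by simp
qed

lemma induced_path_consecutive_pair:
  assumes "induced_path E ps" "a + 1 < length ps"
  shows "card ((!) ps ` {a, a + 1}) = 2 \<and> (\<exists>x y. (!) ps ` {a, a + 1} = {x, y} \<and> E x y)"
proof -
  have "ps ! a \<noteq> ps ! (a + 1)" "E (ps ! a) (ps ! (a + 1))"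
    using assms induced_path_distinct[OF assms(1)] induced_path_adj_iff[OF assms(1), of a "a + 1"]
    by (simp_all add: nth_eq_iff_index_eq)
  then show ?thesis
    by auto
qed

lemma induced_path_consecutive_triple:
  assumes "induced_path E ps" "a + 2 < length ps"
  shows "card ((!) ps ` {a, a + 1, a + 2}) = 3 \<and>
    (\<exists>qs. induced_path E qs \<and> length qs = 3 \<and> set qs = (!) ps ` {a, a + 1, a + 2})"
proof -
  have "{a..<a + 3} = {a, a + 1, a + 2}"
    by auto
  then show ?thesis
    using assms induced_path_slice[OF assms(1), of 3 a] induced_path_distinct[OF assms(1)]
    by (fastforce simp: nth_eq_iff_index_eq)
qed

lemma induced_path_consecutive_quadruple:
  assumes "induced_path E ps" "a + 3 < length ps"
  shows "card ((!) ps ` {a, a + 1, a + 2, a + 3}) = 4 \<and>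
    (\<exists>qs. induced_path E qs \<and> length qs = 4 \<and> set qs = (!) ps ` {a, a + 1, a + 2, a + 3})"
proof -
  have "{a..<a + 4} = {a, a + 1, a + 2, a + 3}"
    by auto
  then show ?thesis
    using assms induced_path_slice[OF assms(1), of 4 a] induced_path_distinct[OF assms(1)]
    by (fastforce simp: nth_eq_iff_index_eq)
qed

lemma induced_path_two_distant_pairs:
  assumes "induced_path E ps" "a + 2 < b" "b + 1 < length ps"
  shows "card ((!) ps ` {a, a + 1, b, b + 1}) = 4 \<and>
    (\<exists>w x y z. (!) ps ` {a, a + 1, b, b + 1} = {w, x, y, z} \<and> distinct [w, x, y, z] \<and>
      E w x \<and> E y z \<and> \<not> E w y \<and> \<not> E w z \<and> \<not> E x y \<and> \<not> E x z)"
proof -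
  have distinct: "distinct [ps ! a, ps ! (a + 1), ps ! b, ps ! (b + 1)]"
    using assms induced_path_distinct[OF assms(1)] by (auto simp: nth_eq_iff_index_eq)
  have "E (ps ! a) (ps ! (a + 1))" "E (ps ! b) (ps ! (b + 1))"
    "\<not> E (ps ! a) (ps ! b)" "\<not> E (ps ! a) (ps ! (b + 1))"
    "\<not> E (ps ! (a + 1)) (ps ! b)" "\<not> E (ps ! (a + 1)) (ps ! (b + 1))"
    using assms(2,3) induced_path_adj_iff[OF assms(1)] by auto
  with distinct show ?thesis
    by (intro conjI exI[of _ "ps ! a"] exI[of _ "ps ! (a + 1)"] exI[of _ "ps ! b"]
        exI[of _ "ps ! (b + 1)"]) simp_all
qed

lemma induced_path_endpoints:
  assumes "induced_path E ps"
  shows "path_endpoint E (set ps) (ps ! 0)" "path_endpoint E (set ps) (ps ! (length ps - 1))"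
proof -
  have "ps \<noteq> []"
    using assms by (simp add: induced_path_def)
  then show "path_endpoint E (set ps) (ps ! 0)" "path_endpoint E (set ps) (ps ! (length ps - 1))"
    using assms unfolding path_endpoint_def by (metis hd_conv_nth last_conv_nth)+
qed

lemma induced_path_consecutive_triple_cases:
  assumes "induced_path E ps" "a + 2 < length ps"
  defines "L \<equiv> set ps" and "T \<equiv> (!) ps ` {a, a + 1, a + 2}"
  shows "(\<exists>e x y. path_endpoint E L e \<and> x \<in> L \<and> y \<in> L \<and> E x y \<and> T = {e, x, y})
    \<or> (card T = 3 \<and> (\<exists>qs. induced_path E qs \<and> length qs = 3 \<and> set qs = T)
        \<and> (\<forall>v\<in>T. card (nbhd_in E L v) = 2))"
proof -
  have edge: "ps ! i \<in> L" "ps ! (i + 1) \<in> L" "E (ps ! i) (ps ! (i + 1))" if "i + 1 < length ps" for i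
    using that induced_path_adj_iff[OF assms(1), of i "i + 1"] by (auto simp: L_def)
  have T: "T = {ps ! a, ps ! (a + 1), ps ! (a + 2)}"
    by (simp add: T_def)
  consider "a = 0" | "a + 3 = length ps" | "0 < a" "a + 3 < length ps"
    using assms(2) by linarith
  then show ?thesis
  proof cases
    case 1
    then have "path_endpoint E L (ps ! a)" "ps ! (a + 1) \<in> L" "ps ! (a + 2) \<in> L"
      "E (ps ! (a + 1)) (ps ! (a + 2))"
      using induced_path_endpoints(1)[OF assms(1)] edge[of "a + 1"] assms(2) by (simp_all add: L_def)
    then show ?thesis
      unfolding T by blast
  next
    case 2
    then have "length ps - 1 = a + 2"
      by simp
    then have "path_endpoint E L (ps ! (a + 2))" "ps ! a \<in> L" "ps ! (a + 1) \<in> L"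
      "E (ps ! a) (ps ! (a + 1))"
      using induced_path_endpoints(2)[OF assms(1)] edge[of a] assms(2) by (simp_all add: L_def)
    moreover have "T = {ps ! (a + 2), ps ! a, ps ! (a + 1)}"
      using T by auto
    ultimately show ?thesis
      by blast
  next
    case 3
    then have "\<forall>v\<in>T. card (nbhd_in E L v) = 2"
      using T card_nbhd_in_induced_path_interior[OF assms(1), of a]
        card_nbhd_in_induced_path_interior[OF assms(1), of "a + 1"]
        card_nbhd_in_induced_path_interior[OF assms(1), of "a + 2"]
      by (auto simp: L_def)
    then show ?thesis
      using induced_path_consecutive_triple[OF assms(1,2)] by (simp add: T_def)
  qed
qed

lemma induced_hole_length: "induced_hole E cs \<Longrightarrow> 4 \<le> length cs"
  unfolding induced_hole_def by blast

lemma induced_hole_distinct: "induced_hole E cs \<Longrightarrow> distinct cs"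
  unfolding induced_hole_def by blast

lemma induced_hole_adj_iff:
  "induced_hole E cs \<Longrightarrow> i < length cs \<Longrightarrow> k < length cs \<Longrightarrow>
    E (cs ! i) (cs ! k) \<longleftrightarrow> k = (i + 1) mod length cs \<or> i = (k + 1) mod length cs"
  unfolding induced_hole_def by blast

lemma induced_hole_rotate:
  assumes "induced_hole E cs"
  shows "induced_hole E (rotate m cs)"
proof -
  let ?n = "length cs"
  have succ_iff: "(m + k) mod ?n = ((m + i) mod ?n + 1) mod ?n \<longleftrightarrow> k = (i + 1) mod ?n"
    if "k < ?n" for i k
    using that cong_add_lcancel_nat[of m k "i + 1" ?n] unfolding cong_def
    by (simp add: mod_simps add.assoc)
  have "E (rotate m cs ! i) (rotate m cs ! k) \<longleftrightarrow> k = (i + 1) mod ?n \<or> i = (k + 1) mod ?n"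
    if "i < ?n" "k < ?n" for i k
  proof -
    have "0 < ?n"
      using that by linarith
    then have "(m + i) mod ?n < ?n" "(m + k) mod ?n < ?n"
      by simp_all
    then show ?thesis
      using that succ_iff[of k i] succ_iff[of i k] induced_hole_adj_iff[OF assms]
      by (simp add: nth_rotate)
  qed
  then show ?thesis
    using assms unfolding induced_hole_def by simp
qed

lemma induced_path_butlast_if_induced_hole:
  assumes "induced_hole E cs"
  shows "induced_path E (butlast cs)"
proof -
  have "E (butlast cs ! i) (butlast cs ! k) \<longleftrightarrow> i = k + 1 \<or> k = i + 1"
    if "i < length cs - 1" "k < length cs - 1" for i k
    using that induced_hole_adj_iff[OF assms, of i k] by (auto simp: nth_butlast)
  moreover have "butlast cs \<noteq> []"
    using induced_hole_length[OF assms] by (cases cs rule: rev_cases) auto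
  ultimately show ?thesis
    using induced_hole_distinct[OF assms] unfolding induced_path_def by (simp add: distinct_butlast)
qed

lemma set_butlast_distinct: "distinct xs \<Longrightarrow> xs \<noteq> [] \<Longrightarrow> set (butlast xs) = set xs - {last xs}"
  by (cases xs rule: rev_cases) auto

lemma induced_hole_delete_vertex:
  assumes "induced_hole E cs" "w \<in> set cs"
  obtains ps where "induced_path E ps" "set ps = set cs - {w}"
proof -
  obtain r where r: "r < length cs" "cs ! r = w"
    using assms(2) by (meson in_set_conv_nth)
  define cs' where "cs' = rotate (Suc r) cs"
  have len: "length cs' = length cs"
    by (simp add: cs'_def)
  have "last cs' = cs' ! (length cs - 1)"
    using r(1) len by (metis last_conv_nth length_greater_0_conv not_less0 zero_less_iff_neq_zero)
  also have "\<dots> = cs ! ((Suc r + (length cs - 1)) mod length cs)"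
    unfolding cs'_def using r(1) by (intro nth_rotate) simp
  also have "Suc r + (length cs - 1) = r + length cs"
    using r(1) by linarith
  finally have "last cs' = w"
    using r by simp
  moreover have "distinct cs'" "cs' \<noteq> []" "set cs' = set cs"
    using induced_hole_distinct[OF assms(1)] r(1) len by (auto simp: cs'_def)
  ultimately have "set (butlast cs') = set cs - {w}"
    using set_butlast_distinct by metis
  then show thesis
    using that induced_path_butlast_if_induced_hole[OF induced_hole_rotate[OF assms(1)]]
    unfolding cs'_def by blast
qed

lemma nbhd_in_induced_hole:
  assumes "induced_hole E cs" "v \<in> set cs"
  obtains u w where "nbhd_in E (set cs) v = {u, w}" "u \<noteq> w" "\<not> E u w"
proof -
  let ?n = "length cs"
  obtain i where "i < ?n" "cs ! i = v"
    using assms(2) by (meson in_set_conv_nth)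
  have "cs \<noteq> []"
    using assms(2) by auto
  define cs' where "cs' = rotate i cs"
  have hole: "induced_hole E cs'" and set: "set cs' = set cs" and len: "length cs' = ?n"
    using induced_hole_rotate[OF assms(1)] by (simp_all add: cs'_def)
  have n: "4 \<le> ?n"
    using induced_hole_length[OF assms(1)] .
  have v: "v = cs' ! 0"
    using \<open>i < ?n\<close> \<open>cs ! i = v\<close> \<open>cs \<noteq> []\<close> nth_rotate[of 0 cs i] by (simp add: cs'_def)
  have adj_v: "E v (cs' ! k) \<longleftrightarrow> k = 1 \<or> k = ?n - 1" if "k < ?n" for k
  proof -
    have "(k + 1) mod ?n = 0 \<longleftrightarrow> k = ?n - 1"
      using that by (auto simp: mod_Suc)
    then show ?thesis
      using that n \<open>cs \<noteq> []\<close> induced_hole_adj_iff[OF hole, of 0 k] by (simp add: v len)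
  qed
  have "cs' ! 1 \<in> set cs" "cs' ! (?n - 1) \<in> set cs"
    using n nth_mem[of 1 cs'] nth_mem[of "?n - 1" cs'] by (simp_all add: set len)
  then have "nbhd_in E (set cs) v = {cs' ! 1, cs' ! (?n - 1)}"
    using n adj_v unfolding nbhd_in_def set[symmetric] by (auto simp: in_set_conv_nth len)
  moreover have "cs' ! 1 \<noteq> cs' ! (?n - 1)"
    using n induced_hole_distinct[OF hole] by (simp add: nth_eq_iff_index_eq len)
  moreover have "\<not> E (cs' ! 1) (cs' ! (?n - 1))"
    using n induced_hole_adj_iff[OF hole, of 1 "?n - 1"] by (simp add: len mod_Suc)
  ultimately show thesis
    using that by blast
qed

lemma card_nbhd_in_induced_hole:
  assumes "induced_hole E cs" "v \<in> set cs"
  shows "card (nbhd_in E (set cs) v) = 2"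
proof -
  obtain u w where "nbhd_in E (set cs) v = {u, w}" "u \<noteq> w"
    using nbhd_in_induced_hole[OF assms] by metis
  then show ?thesis
    by simp
qed

lemma dominated_induced_hole_length:
  assumes "claw_free V E" "induced_hole E cs" "set cs \<subseteq> V" "j \<in> V" "\<forall>v\<in>set cs. E j v"
  shows "length cs \<le> 5"
proof (rule ccontr)
  let ?n = "length cs"
  assume "\<not> ?n \<le> 5"
  then have "0 < ?n" "2 < ?n" "4 < ?n"
    by linarith+
  then have "distinct [cs ! 0, cs ! 2, cs ! 4]" "cs ! 0 \<in> set cs" "cs ! 2 \<in> set cs" "cs ! 4 \<in> set cs"
    using induced_hole_distinct[OF assms(2)] by (auto simp: nth_eq_iff_index_eq)
  then have "E (cs ! 0) (cs ! 2) \<or> E (cs ! 0) (cs ! 4) \<or> E (cs ! 2) (cs ! 4)"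
    using assms(3-5) by (intro claw_freeD[OF assms(1), of j]) auto
  then show False
    using \<open>\<not> ?n \<le> 5\<close> \<open>0 < ?n\<close> induced_hole_adj_iff[OF assms(2), of 0 2]
      induced_hole_adj_iff[OF assms(2), of 0 4] induced_hole_adj_iff[OF assms(2), of 2 4]
    by simp
qed

lemma subset_min_max_if_no_gapped_triple:
  fixes S :: "nat set"
  assumes "finite S" "S \<noteq> {}"
    and no_gap: "\<forall>x\<in>S. \<forall>y\<in>S. \<forall>z\<in>S. x < y \<longrightarrow> y < z \<longrightarrow> y = x + 1 \<or> z = y + 1"
  shows "S \<subseteq> {Min S, Min S + 1, Max S - 1, Max S}"
proof
  fix y assume y: "y \<in> S"
  have "Min S \<le> y" "y \<le> Max S" "Min S \<in> S" "Max S \<in> S"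
    using assms(1,2) y by simp_all
  moreover have "y = Min S + 1 \<or> Max S = y + 1" if "Min S < y" "y < Max S"
    using no_gap y that \<open>Min S \<in> S\<close> \<open>Max S \<in> S\<close> by blast
  ultimately show "y \<in> {Min S, Min S + 1, Max S - 1, Max S}"
    by fastforce
qed

lemma no_gapped_triple_cases:
  fixes S :: "nat set"
  assumes "S \<subseteq> {..<n}"
    and no_gap: "\<forall>x\<in>S. \<forall>y\<in>S. \<forall>z\<in>S. x < y \<longrightarrow> y < z \<longrightarrow> y = x + 1 \<or> z = y + 1"
    and no_inner_isolated: "\<forall>i\<in>S. 0 < i \<longrightarrow> i + 1 < n \<longrightarrow> i - 1 \<in> S \<or> i + 1 \<in> S"
  obtains (empty) "S = {}"
    | (endpoint) a where "S = {a}" "a = 0 \<or> a + 1 = n"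
    | (pair) a where "S = {a, a + 1}"
    | (both_ends) "S = {0, n - 1}" "2 < n"
    | (triple) a where "S = {a, a + 1, a + 2}"
    | (first_and_pair) a where "S = {0, a, a + 1}" "1 < a"
    | (pair_and_last) a where "S = {a, a + 1, n - 1}" "a + 3 < n"
    | (quadruple) a where "S = {a, a + 1, a + 2, a + 3}"
    | (two_pairs) a b where "S = {a, a + 1, b, b + 1}" "a + 2 < b"
proof (cases "S = {}")
  case True
  then show ?thesis by (rule empty)
next
  case False
  have "finite S"
    using assms(1) finite_subset by blast
  define a b where "a = Min S" and "b = Max S"
  have ab: "a \<in> S" "b \<in> S" "a \<le> b" "b < n"
    using \<open>finite S\<close> False assms(1) by (auto simp: a_def b_def)
  have bounds: "a \<le> x" "x \<le> b" if "x \<in> S" for x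
    using \<open>finite S\<close> that by (simp_all add: a_def b_def)
  have S_sub: "S \<subseteq> {a, a + 1, b - 1, b}"
    unfolding a_def b_def using \<open>finite S\<close> False no_gap by (rule subset_min_max_if_no_gapped_triple)
  have isolated_end: "i = 0 \<or> i + 1 = n"
    if "i \<in> S" "i + 1 \<notin> S" "i = 0 \<or> i - 1 \<notin> S" for i
    using no_inner_isolated that assms(1) by fastforce
  have outside: "a = 0 \<or> a - 1 \<notin> S" "b + 1 \<notin> S"
    using bounds(1)[of "a - 1"] bounds(2)[of "b + 1"] by auto
  consider "b = a" | "b = a + 1" | "a + 2 \<le> b" "a + 1 \<in> S" "b - 1 \<in> S"
    | "a + 2 \<le> b" "a + 1 \<in> S" "b - 1 \<notin> S" | "a + 2 \<le> b" "a + 1 \<notin> S" "b - 1 \<in> S"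
    | "a + 2 \<le> b" "a + 1 \<notin> S" "b - 1 \<notin> S"
    using ab(3) by linarith
  then show ?thesis
  proof cases
    case 1
    then have "S = {a}"
      using ab bounds by force
    then show ?thesis
      using isolated_end[of a] ab outside by (intro endpoint) auto
  next
    case 2
    then have "S = {a, a + 1}"
      using S_sub ab by auto
    then show ?thesis by (rule pair)
  next
    case 3
    then consider "b = a + 2" | "b = a + 3" | "a + 4 \<le> b"
      by linarith
    then show ?thesis
    proof cases
      case 1
      then show ?thesis
        using S_sub ab \<open>a + 1 \<in> S\<close> by (intro triple[of a]) auto
    next
      case 2
      then show ?thesis
        using S_sub ab \<open>a + 1 \<in> S\<close> \<open>b - 1 \<in> S\<close> by (intro quadruple[of a]) auto
    next
      case 3
      then show ?thesis
        using S_sub ab \<open>a + 1 \<in> S\<close> \<open>b - 1 \<in> S\<close> by (intro two_pairs[of a "b - 1"]) auto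
    qed
  next
    case 4
    then have "S = {a, a + 1, b}"
      using S_sub ab by auto
    moreover have "b + 1 = n"
      using isolated_end[OF ab(2) outside(2)] 4 by linarith
    ultimately show ?thesis
      using 4 by (intro pair_and_last[of a]) auto
  next
    case 5
    then have "S = {a, b - 1, b}"
      using S_sub ab by auto
    moreover have "a = 0"
      using isolated_end[OF ab(1) _ outside(1)] 5 ab(4) by linarith
    ultimately show ?thesis
      using 5 by (intro first_and_pair[of "b - 1"]) auto
  next
    case 6
    then have "S = {a, b}"
      using S_sub ab by auto
    moreover have "a = 0" "b + 1 = n"
      using isolated_end[OF ab(1) _ outside(1)] isolated_end[OF ab(2) outside(2)] 6 ab(4)
      by linarith+
    ultimately show ?thesis
      using 6 by (intro both_ends) auto
  qed
qed

definition nbhd_indices :: "('a \<Rightarrow> 'a \<Rightarrow> bool) \<Rightarrow> 'a list \<Rightarrow> 'a \<Rightarrow> nat set" where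
  "nbhd_indices E ps j = {i. i < length ps \<and> E j (ps ! i)}"

lemma nbhd_in_eq_image_nbhd_indices: "nbhd_in E (set ps) j = (!) ps ` nbhd_indices E ps j"
  unfolding nbhd_in_def nbhd_indices_def by (auto simp: in_set_conv_nth)

lemma nbhd_indices_subset: "nbhd_indices E ps j \<subseteq> {..<length ps}"
  unfolding nbhd_indices_def by auto

lemma nbhd_indices_no_gapped_triple:
  assumes "claw_free V E" "induced_path E ps" "set ps \<subseteq> V" "j \<in> V"
  defines "S \<equiv> nbhd_indices E ps j"
  shows "\<forall>x\<in>S. \<forall>y\<in>S. \<forall>z\<in>S. x < y \<longrightarrow> y < z \<longrightarrow> y = x + 1 \<or> z = y + 1"
proof (intro ballI impI)
  fix x y z assume xyz: "x \<in> S" "y \<in> S" "z \<in> S" "x < y" "y < z"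
  show "y = x + 1 \<or> z = y + 1"
  proof (rule ccontr)
    assume gaps: "\<not> ?thesis"
    have "z < length ps"
      using xyz(3) by (simp add: S_def nbhd_indices_def)
    then have "distinct [ps ! x, ps ! y, ps ! z]" "ps ! x \<in> V" "ps ! y \<in> V" "ps ! z \<in> V"
      using assms(3) xyz(4,5) induced_path_distinct[OF assms(2)] by (auto simp: nth_eq_iff_index_eq)
    then have "E (ps ! x) (ps ! y) \<or> E (ps ! x) (ps ! z) \<or> E (ps ! y) (ps ! z)"
      using claw_freeD[OF assms(1,4)] xyz(1-3) by (simp add: S_def nbhd_indices_def)
    then show False
      using gaps xyz(4,5) \<open>z < length ps\<close> induced_path_adj_iff[OF assms(2)] by auto
  qed
qed

lemma nbhd_indices_no_inner_isolated:
  assumes "graph V E" "claw_free V E" "induced_path E ps" "set ps \<subseteq> V" "j \<in> V" "j \<notin> set ps"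
  defines "S \<equiv> nbhd_indices E ps j"
  shows "\<forall>i\<in>S. 0 < i \<longrightarrow> i + 1 < length ps \<longrightarrow> i - 1 \<in> S \<or> i + 1 \<in> S"
proof (intro ballI impI)
  fix i assume i: "i \<in> S" "0 < i" "i + 1 < length ps"
  have "ps ! (i - 1) \<in> set ps" "ps ! i \<in> set ps" "ps ! (i + 1) \<in> set ps"
    using i(3) by simp_all
  moreover have "ps ! (i - 1) \<noteq> ps ! (i + 1)"
    using i(3) induced_path_distinct[OF assms(3)] by (simp add: nth_eq_iff_index_eq)
  moreover have "E (ps ! i) j"
    using i(1) graph_sym[OF assms(1)] by (simp add: S_def nbhd_indices_def)
  ultimately have "E j (ps ! (i - 1)) \<or> E j (ps ! (i + 1)) \<or> E (ps ! (i - 1)) (ps ! (i + 1))"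
    using assms(4-6) induced_path_adj_iff[OF assms(3), of i] i(2,3)
    by (intro claw_freeD[OF assms(2), of "ps ! i"]) auto
  then show "i - 1 \<in> S \<or> i + 1 \<in> S"
    using i(2,3) induced_path_adj_iff[OF assms(3), of "i - 1" "i + 1"] by (auto simp: S_def nbhd_indices_def)
qed

lemma nbhd_in_induced_hole_has_neighbour:
  assumes "graph V E" "claw_free V E" "induced_hole E cs" "set cs \<subseteq> V" "j \<in> V" "j \<notin> set cs"
    and v: "v \<in> nbhd_in E (set cs) j"
  shows "\<exists>u\<in>nbhd_in E (set cs) j. E v u"
proof -
  have "v \<in> set cs"
    using v by (simp add: nbhd_in_def)
  then obtain u w where uw: "nbhd_in E (set cs) v = {u, w}" "u \<noteq> w" "\<not> E u w"
    using nbhd_in_induced_hole[OF assms(3)] by metis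
  then have "u \<in> set cs" "w \<in> set cs" "E v u" "E v w"
    by (auto simp: nbhd_in_def set_eq_iff)
  moreover have "E v j"
    using v graph_sym[OF assms(1)] by (simp add: nbhd_in_def)
  ultimately have "E j u \<or> E j w \<or> E u w"
    using assms(4-6) \<open>v \<in> set cs\<close> uw(2) by (intro claw_freeD[OF assms(2), of v]) auto
  then show ?thesis
    using uw(3) \<open>E v u\<close> \<open>E v w\<close> \<open>u \<in> set cs\<close> \<open>w \<in> set cs\<close> by (auto simp: nbhd_in_def)
qed

lemma nbhd_in_induced_path_cases:
  assumes "graph V E" "claw_free V E" "induced_path E ps" "set ps = L" "L \<subseteq> V" "j \<in> V - L"
  defines "N \<equiv> nbhd_in E L j"
  shows "N = {}
    \<or> (card N = 2 \<and> (\<exists>a b. N = {a, b} \<and> E a b))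
    \<or> (card N = 4 \<and>
        ((\<exists>a b c d. N = {a, b, c, d} \<and> distinct [a, b, c, d] \<and> E a b \<and> E c d \<and>
            \<not> E a c \<and> \<not> E a d \<and> \<not> E b c \<and> \<not> E b d)
         \<or> (\<exists>ps. induced_path E ps \<and> length ps = 4 \<and> set ps = N)))
    \<or> (\<exists>ps. induced_path E ps \<and> set ps = L \<and> length ps \<ge> 2 \<and> N = {hd ps, last ps})
    \<or> (card N = 3 \<and> (\<exists>ps. induced_path E ps \<and> length ps = 3 \<and> set ps = N)
        \<and> (\<forall>v\<in>N. card (nbhd_in E L v) = 2))
    \<or> (\<exists>e. path_endpoint E L e \<and> N = {e})
    \<or> (\<exists>e x y. path_endpoint E L e \<and> x \<in> L \<and> y \<in> L \<and> E x y \<and> N = {e, x, y})"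
proof -
  let ?n = "length ps" and ?S = "nbhd_indices E ps j"
  have N: "N = (!) ps ` ?S"
    unfolding N_def assms(4)[symmetric] by (rule nbhd_in_eq_image_nbhd_indices)
  have S_sub: "?S \<subseteq> {..<?n}"
    by (rule nbhd_indices_subset)
  have endpoints: "path_endpoint E L (ps ! 0)" "path_endpoint E L (ps ! (?n - 1))"
    using induced_path_endpoints[OF assms(3)] assms(4) by simp_all
  have edge: "ps ! a \<in> L" "ps ! (a + 1) \<in> L" "E (ps ! a) (ps ! (a + 1))" if "a + 1 < ?n" for a
    using that assms(4) induced_path_adj_iff[OF assms(3), of a "a + 1"] by auto
  have ps_V: "set ps \<subseteq> V" and j_outside: "j \<in> V" "j \<notin> set ps"
    using assms(4-6) by auto
  from S_sub nbhd_indices_no_gapped_triple[OF assms(2,3) ps_V j_outside(1)]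
    nbhd_indices_no_inner_isolated[OF assms(1-3) ps_V j_outside]
  show ?thesis
  proof (cases rule: no_gapped_triple_cases)
    case empty
    then show ?thesis
      using N by simp
  next
    case (endpoint a)
    then have "\<exists>e. path_endpoint E L e \<and> N = {e}"
      using N endpoints by auto
    then show ?thesis by blast
  next
    case (pair a)
    then have "card N = 2 \<and> (\<exists>a b. N = {a, b} \<and> E a b)"
      using N S_sub induced_path_consecutive_pair[OF assms(3), of a] by auto
    then show ?thesis by blast
  next
    case both_ends
    then have "N = {hd ps, last ps}"
      using N assms(3) by (simp add: induced_path_def hd_conv_nth last_conv_nth)
    then have "\<exists>ps. induced_path E ps \<and> set ps = L \<and> length ps \<ge> 2 \<and> N = {hd ps, last ps}"
      using both_ends assms(3,4) by auto
    then show ?thesis by blast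
  next
    case (triple a)
    then have "a + 2 < ?n"
      using S_sub by auto
    from induced_path_consecutive_triple_cases[OF assms(3) this]
    show ?thesis
      unfolding N triple assms(4) by (elim disjE) blast+
  next
    case (first_and_pair a)
    then have "\<exists>e x y. path_endpoint E L e \<and> x \<in> L \<and> y \<in> L \<and> E x y \<and> N = {e, x, y}"
      using N S_sub endpoints(1) edge[of a] by auto
    then show ?thesis by blast
  next
    case (pair_and_last a)
    then have "\<exists>e x y. path_endpoint E L e \<and> x \<in> L \<and> y \<in> L \<and> E x y \<and> N = {e, x, y}"
      using N endpoints(2) edge[of a] by auto
    then show ?thesis by blast
  next
    case (quadruple a)
    then have "card N = 4 \<and> (\<exists>ps. induced_path E ps \<and> length ps = 4 \<and> set ps = N)"
      using N S_sub induced_path_consecutive_quadruple[OF assms(3), of a] by auto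
    then show ?thesis by blast
  next
    case (two_pairs a b)
    then have "card N = 4 \<and> (\<exists>a b c d. N = {a, b, c, d} \<and> distinct [a, b, c, d] \<and> E a b \<and> E c d \<and>
            \<not> E a c \<and> \<not> E a d \<and> \<not> E b c \<and> \<not> E b d)"
      using N S_sub induced_path_two_distant_pairs[OF assms(3), of a b] by auto
    then show ?thesis by blast
  qed
qed

lemma nbhd_in_induced_path_no_isolated_cases:
  assumes "graph V E" "claw_free V E" "induced_path E ps" "set ps \<subseteq> V" "j \<in> V" "j \<notin> set ps"
  defines "N \<equiv> nbhd_in E (set ps) j"
  assumes no_isolated: "\<forall>v\<in>N. \<exists>u\<in>N. E v u"
  shows "N = {}
    \<or> (card N = 2 \<and> (\<exists>a b. N = {a, b} \<and> E a b))
    \<or> (card N = 4 \<and>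
        ((\<exists>a b c d. N = {a, b, c, d} \<and> distinct [a, b, c, d] \<and> E a b \<and> E c d \<and>
            \<not> E a c \<and> \<not> E a d \<and> \<not> E b c \<and> \<not> E b d)
         \<or> (\<exists>ps. induced_path E ps \<and> length ps = 4 \<and> set ps = N)))
    \<or> (card N = 3 \<and> (\<exists>ps. induced_path E ps \<and> length ps = 3 \<and> set ps = N))"
proof -
  let ?n = "length ps" and ?S = "nbhd_indices E ps j"
  have N: "N = (!) ps ` ?S"
    unfolding N_def by (rule nbhd_in_eq_image_nbhd_indices)
  have S_sub: "?S \<subseteq> {..<?n}"
    by (rule nbhd_indices_subset)
  have no_isolated_index: "\<exists>k\<in>?S. k = i + 1 \<or> i = k + 1" if "i \<in> ?S" for i
  proof -
    have "ps ! i \<in> N"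
      using that N by blast
    then obtain u where "u \<in> N" "E (ps ! i) u"
      using no_isolated by blast
    then obtain k where "k \<in> ?S" "E (ps ! i) (ps ! k)"
      using N by blast
    then show ?thesis
      using that S_sub induced_path_adj_iff[OF assms(3), of i k] by auto
  qed
  from S_sub nbhd_indices_no_gapped_triple[OF assms(2-5)] nbhd_indices_no_inner_isolated[OF assms(1-6)]
  show ?thesis
  proof (cases rule: no_gapped_triple_cases)
    case empty
    then show ?thesis
      using N by simp
  next
    case (pair a)
    then have "card N = 2 \<and> (\<exists>a b. N = {a, b} \<and> E a b)"
      using N S_sub induced_path_consecutive_pair[OF assms(3), of a] by auto
    then show ?thesis by blast
  next
    case (triple a)
    then have "card N = 3 \<and> (\<exists>ps. induced_path E ps \<and> length ps = 3 \<and> set ps = N)"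
      using N S_sub induced_path_consecutive_triple[OF assms(3), of a] by auto
    then show ?thesis by blast
  next
    case (quadruple a)
    then have "card N = 4 \<and> (\<exists>ps. induced_path E ps \<and> length ps = 4 \<and> set ps = N)"
      using N S_sub induced_path_consecutive_quadruple[OF assms(3), of a] by auto
    then show ?thesis by blast
  next
    case (two_pairs a b)
    then have "card N = 4 \<and> (\<exists>a b c d. N = {a, b, c, d} \<and> distinct [a, b, c, d] \<and> E a b \<and> E c d \<and>
            \<not> E a c \<and> \<not> E a d \<and> \<not> E b c \<and> \<not> E b d)"
      using N S_sub induced_path_two_distant_pairs[OF assms(3), of a b] by auto
    then show ?thesis by blast
  next
    case (endpoint a)
    then have False
      using no_isolated_index[of a] by simp
    then show ?thesis ..
  next
    case both_ends
    then have False
      using no_isolated_index[of 0] by auto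
    then show ?thesis ..
  next
    case (first_and_pair a)
    then have False
      using no_isolated_index[of 0] by auto
    then show ?thesis ..
  next
    case (pair_and_last a)
    then have False
      using no_isolated_index[of "?n - 1"] by auto
    then show ?thesis ..
  qed
qed

lemma nbhd_in_induced_hole_cases:
  assumes "graph V E" "claw_free V E" "induced_hole E cs" "set cs = L" "L \<subseteq> V" "j \<in> V - L"
  defines "N \<equiv> nbhd_in E L j"
  shows "N = {}
    \<or> (card N = 2 \<and> (\<exists>a b. N = {a, b} \<and> E a b))
    \<or> (card N = 4 \<and>
        ((\<exists>a b c d. N = {a, b, c, d} \<and> distinct [a, b, c, d] \<and> E a b \<and> E c d \<and>
            \<not> E a c \<and> \<not> E a d \<and> \<not> E b c \<and> \<not> E b d)
         \<or> (\<exists>ps. induced_path E ps \<and> length ps = 4 \<and> set ps = N)))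
    \<or> (card L = 4 \<and> N = L)
    \<or> (card N = 3 \<and> (\<exists>ps. induced_path E ps \<and> length ps = 3 \<and> set ps = N)
        \<and> (\<forall>v\<in>N. card (nbhd_in E L v) = 2))
    \<or> (card L = 5 \<and> N = L)"
proof (cases "N = L")
  case True
  have "length cs \<le> 5"
    using True assms(4-6) unfolding N_def nbhd_in_def
    by (intro dominated_induced_hole_length[OF assms(2,3)]) auto
  moreover have "card L = length cs"
    using induced_hole_distinct[OF assms(3)] assms(4) distinct_card by blast
  ultimately have "card L = 4 \<or> card L = 5"
    using induced_hole_length[OF assms(3)] by linarith
  then show ?thesis
    using True by blast
next
  case False
  then obtain w where "w \<in> L" "w \<notin> N"
    unfolding N_def nbhd_in_def by blast
  then obtain ps where ps: "induced_path E ps" "set ps = L - {w}"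
    using induced_hole_delete_vertex[OF assms(3)] assms(4) by metis
  have N_ps: "N = nbhd_in E (set ps) j"
    using \<open>w \<notin> N\<close> ps(2) unfolding N_def nbhd_in_def by auto
  have "\<forall>v\<in>N. \<exists>u\<in>N. E v u"
    using nbhd_in_induced_hole_has_neighbour[OF assms(1-3)] assms(4-6) unfolding N_def by blast
  then have "N = {}
    \<or> (card N = 2 \<and> (\<exists>a b. N = {a, b} \<and> E a b))
    \<or> (card N = 4 \<and>
        ((\<exists>a b c d. N = {a, b, c, d} \<and> distinct [a, b, c, d] \<and> E a b \<and> E c d \<and>
            \<not> E a c \<and> \<not> E a d \<and> \<not> E b c \<and> \<not> E b d)
         \<or> (\<exists>ps. induced_path E ps \<and> length ps = 4 \<and> set ps = N)))
    \<or> (card N = 3 \<and> (\<exists>ps. induced_path E ps \<and> length ps = 3 \<and> set ps = N))"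
    unfolding N_ps using assms(5,6) ps
    by (intro nbhd_in_induced_path_no_isolated_cases[OF assms(1,2) ps(1)]) auto
  moreover have "\<forall>v\<in>N. card (nbhd_in E L v) = 2"
    using card_nbhd_in_induced_hole[OF assms(3)] assms(4) unfolding N_def nbhd_in_def by auto
  ultimately show ?thesis
    by (elim disjE) blast+
qed

theorem lemma2:
  fixes V L :: "'a set" and E :: "'a \<Rightarrow> 'a \<Rightarrow> bool" and j :: 'a
  assumes "graph V E" and "claw_free V E"
    and "L \<subseteq> V"
    and "is_induced_path_set E L \<or> is_hole_set E L"
    and "j \<in> V - L"
  defines "N \<equiv> nbhd_in E L j"
  shows
   "N = {}
    \<or> (card N = 2 \<and> (\<exists>a b. N = {a, b} \<and> E a b))
    \<or> (card N = 4 \<and>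
        ((\<exists>a b c d. N = {a, b, c, d} \<and> distinct [a, b, c, d] \<and> E a b \<and> E c d \<and>
            \<not> E a c \<and> \<not> E a d \<and> \<not> E b c \<and> \<not> E b d)
         \<or> (\<exists>ps. induced_path E ps \<and> length ps = 4 \<and> set ps = N)))
    \<or> (is_hole_set E L \<and> card L = 4 \<and> N = L)
    \<or> (\<exists>ps. induced_path E ps \<and> set ps = L \<and> length ps \<ge> 2 \<and> N = {hd ps, last ps})
    \<or> (card N = 3 \<and> (\<exists>ps. induced_path E ps \<and> length ps = 3 \<and> set ps = N)
        \<and> (\<forall>v\<in>N. card (nbhd_in E L v) = 2))
    \<or> (is_hole_set E L \<and> card L = 5 \<and> N = L)
    \<or> (is_induced_path_set E L \<and> (\<exists>e. path_endpoint E L e \<and> N = {e}))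
    \<or> (is_induced_path_set E L \<and>
        (\<exists>e x y. path_endpoint E L e \<and> x \<in> L \<and> y \<in> L \<and> E x y \<and> N = {e, x, y}))"
  using assms(4)
proof
  assume path: "is_induced_path_set E L"
  then obtain ps where "induced_path E ps" "set ps = L"
    unfolding is_induced_path_set_def by blast
  from nbhd_in_induced_path_cases[OF assms(1,2) this assms(3,5), folded N_def]
  show ?thesis
    using path by (elim disjE) blast+
next
  assume hole: "is_hole_set E L"
  then obtain cs where "induced_hole E cs" "set cs = L"
    unfolding is_hole_set_def by blast
  from nbhd_in_induced_hole_cases[OF assms(1,2) this assms(3,5), folded N_def]
  show ?thesis
    using hole by (elim disjE) blast+
qed

end
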